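(* Let $G=\langle A\cup B\rangle$ be a CS group, let $g=({}^{a_0}b_0)\cdots({}^{a_{n-1}}b_{n-1})a_n\in G$ with $a_i\in A$, $b_i\in B$, and let $x\in X$ with $\ell:=\ell_g(x)<\infty$ such that $n=\mathrm{syl}(g\|_x)=\mathrm{syl}(g)$. Then for every $i\in\{0,\dots,n-1\}$ we have $a_i^{-1}a_na_i\in\mathfrak C(a_n,x)$, and there are integers $j(i)$ ($i=0,\dots,n-1$) such that $$g\|_x=\prod_{j=0}^{\ell-1}\ \prod_{i=0}^{n-1} b_i\big|_{0.(a_i^{-1}a_n^{\,j+j(i)}a_i)},$$ where the outer product is ordered by increasing $j$ and the inner one by increasing $i$.
   Context: Let $X$ be a nonempty set (possibly infinite) with distinguished letter $0$, $\dot X=X\setminus\{0\}$. $X^*$ is the free monoid on $X$ (concatenation $\star$) viewed as a rooted tree; $\mathrm{Aut}(X^* )$ acts on the right ($v\mapsto v.g$; $gh$ = first $g$ then $h$); ${}^hg=hgh^{-1}$; sections $g|_u$ are defined by $(u\star v).g=u.g\star v.(g|_u)$; elements of $\mathrm{Sym}(X)$ are identified with rooted automorphisms $(x\star v).\rho=x.\rho\star v$; $\mathrm{St}(1)$ is the first layer stabiliser. $\ell_g(v)$ is the length of the $\langle g\rangle$-orbit of $v$, and $g\|_v:=g^{\ell_g(v)}|_v$ when finite. A constant spinal (CS) group is $G=\langle A\cup B\rangle$ with $A\le\mathrm{Sym}(X)$ transitive and $B\le\mathrm{St}(1)$ such that $b|_0=b$ for all $b\in B$ and the elements $b|_x$ ($b\in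 B$, $x\in\dot X$) lie in $A$ and generate $A$. $\mathrm{syl}(g)$ is the least $n$ such that $g=({}^{a_0}b_0)\cdots({}^{a_{n-1}}b_{n-1})a_n$ with $a_i\in A$, $b_i\in B$. For $x\in X$ let $\mathrm{mp}_A(0,x)=\{c\in A:0.c=x\}$, and for $a\in A$ let $\mathfrak C(a,x)=\{cac^{-1}: c\in\mathrm{mp}_A(0,x)\}$. *)

theory Defs
  imports Main
begin

(* Letters: the type 'x (the set X = UNIV); words: lists (the free monoid X-star).
   Automorphisms act on the right: v.g is written g v.  The product gh means
   "first g, then h", i.e. the function h o g. *)

definition tmul :: "('a \<Rightarrow> 'a) \<Rightarrow> ('a \<Rightarrow> 'a) \<Rightarrow> ('a \<Rightarrow> 'a)" where
  "tmul g h = h \<circ> g"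

definition cj :: "('a \<Rightarrow> 'a) \<Rightarrow> ('a \<Rightarrow> 'a) \<Rightarrow> ('a \<Rightarrow> 'a)" where
  "cj h g = tmul (tmul h g) (inv h)"

fun prodL :: "('a \<Rightarrow> 'a) list \<Rightarrow> ('a \<Rightarrow> 'a)" where
  "prodL [] = id"
| "prodL (f # fs) = tmul f (prodL fs)"

definition zpow :: "('a \<Rightarrow> 'a) \<Rightarrow> int \<Rightarrow> ('a \<Rightarrow> 'a)" where
  "zpow f k = (if 0 \<le> k then f ^^ nat k else (inv f) ^^ nat (- k))"

inductive_set gen_grp :: "('a \<Rightarrow> 'a) set \<Rightarrow> ('a \<Rightarrow> 'a) set" for S where
  gen_id: "id \<in> gen_grp S"
| gen_base: "s \<in> S \<Longrightarrow> s \<in> gen_grp S"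
| gen_mul: "f \<in> gen_grp S \<Longrightarrow> g \<in> gen_grp S \<Longrightarrow> tmul f g \<in> gen_grp S"
| gen_inv: "f \<in> gen_grp S \<Longrightarrow> inv f \<in> gen_grp S"

definition is_subgroup :: "('a \<Rightarrow> 'a) set \<Rightarrow> bool" where
  "is_subgroup H \<longleftrightarrow> (\<forall>h\<in>H. bij h) \<and> id \<in> H \<and>
     (\<forall>f\<in>H. \<forall>g\<in>H. tmul f g \<in> H) \<and> (\<forall>f\<in>H. inv f \<in> H)"

definition is_aut :: "('x list \<Rightarrow> 'x list) \<Rightarrow> bool" where
  "is_aut f \<longleftrightarrow> bij f \<and> (\<forall>w. length (f w) = length w) \<and>
     (\<forall>u v. take (length u) (f (u @ v)) = f u)"

(* section g|_u, defined by (u v).g = u.g  v.(g|_u) *)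
definition sect :: "('x list \<Rightarrow> 'x list) \<Rightarrow> 'x list \<Rightarrow> ('x list \<Rightarrow> 'x list)" where
  "sect g u = (\<lambda>v. drop (length u) (g (u @ v)))"

definition rt :: "('x \<Rightarrow> 'x) \<Rightarrow> ('x list \<Rightarrow> 'x list)" where
  "rt \<rho> w = (case w of [] \<Rightarrow> [] | x # v \<Rightarrow> \<rho> x # v)"

definition in_St1 :: "('x list \<Rightarrow> 'x list) \<Rightarrow> bool" where
  "in_St1 g \<longleftrightarrow> is_aut g \<and> (\<forall>y. g [y] = [y])"

definition fin_orbit :: "('a \<Rightarrow> 'a) \<Rightarrow> 'a \<Rightarrow> bool" where
  "fin_orbit g v \<longleftrightarrow> (\<exists>k>0. (g ^^ k) v = v)"

definition orb_len :: "('a \<Rightarrow> 'a) \<Rightarrow> 'a \<Rightarrow> nat" where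
  "orb_len g v = (LEAST k. k > 0 \<and> (g ^^ k) v = v)"

definition sect_pow :: "('x list \<Rightarrow> 'x list) \<Rightarrow> 'x \<Rightarrow> ('x list \<Rightarrow> 'x list)" where
  "sect_pow g x = sect (g ^^ orb_len g [x]) [x]"

(* constant spinal group data; z is the distinguished letter 0 *)
definition CS_data :: "'x \<Rightarrow> ('x \<Rightarrow> 'x) set \<Rightarrow> ('x list \<Rightarrow> 'x list) set \<Rightarrow> bool" where
  "CS_data z A B \<longleftrightarrow>
     is_subgroup A \<and> (\<forall>x y. \<exists>a\<in>A. a x = y) \<and>
     is_subgroup B \<and> (\<forall>b\<in>B. in_St1 b) \<and>
     (\<forall>b\<in>B. sect b [z] = b) \<and>
     (\<forall>b\<in>B. \<forall>y. y \<noteq> z \<longrightarrow> (\<exists>a\<in>A. sect b [y] = rt a)) \<and>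
     gen_grp {a. \<exists>b\<in>B. \<exists>y. y \<noteq> z \<and> sect b [y] = rt a} = A"

definition CS_group :: "('x \<Rightarrow> 'x) set \<Rightarrow> ('x list \<Rightarrow> 'x list) set \<Rightarrow> ('x list \<Rightarrow> 'x list) set" where
  "CS_group A B = gen_grp (rt ` A \<union> B)"

definition syl_word :: "('x \<Rightarrow> 'x) list \<Rightarrow> ('x list \<Rightarrow> 'x list) list \<Rightarrow> ('x \<Rightarrow> 'x)
     \<Rightarrow> ('x list \<Rightarrow> 'x list)" where
  "syl_word as bs an = tmul (prodL (map2 (\<lambda>a b. cj (rt a) b) as bs)) (rt an)"

definition syl :: "('x \<Rightarrow> 'x) set \<Rightarrow> ('x list \<Rightarrow> 'x list) set \<Rightarrow> ('x list \<Rightarrow> 'x list) \<Rightarrow> nat" where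
  "syl A B g = (LEAST n. \<exists>as bs an. length as = n \<and> length bs = n \<and> set as \<subseteq> A \<and>
       set bs \<subseteq> B \<and> an \<in> A \<and> g = syl_word as bs an)"

definition mpA :: "('x \<Rightarrow> 'x) set \<Rightarrow> 'x \<Rightarrow> 'x \<Rightarrow> ('x \<Rightarrow> 'x) set" where
  "mpA A z x = {c \<in> A. c z = x}"

definition Cfrak :: "('x \<Rightarrow> 'x) set \<Rightarrow> 'x \<Rightarrow> ('x \<Rightarrow> 'x) \<Rightarrow> 'x \<Rightarrow> ('x \<Rightarrow> 'x) set" where
  "Cfrak A z a x = {tmul (tmul c a) (inv c) | c. c \<in> mpA A z x}"

end

theory Submission
  imports Defs
begin

text \<open>
  Since \<open>B\<close> fixes the first layer, \<open>g\<close> acts on first letters as \<open>a_n\<close>, and \<open>g||_x\<close>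
  is the product, over the points \<open>x.a_n^j\<close> (\<open>j < l\<close>) of the \<open>a_n\<close>-orbit of \<open>x\<close>, of the
  sections \<open>b_i|_(x.a_n^j a_i)\<close>.  Such a section is \<open>b_i\<close> itself if \<open>x.a_n^j a_i = 0\<close> and
  a rooted automorphism from \<open>A\<close> otherwise, so collecting the rooted factors gives a
  representation of \<open>g||_x\<close> with one syllable per pair \<open>(j, i)\<close> with \<open>x.a_n^j a_i = 0\<close>.
  The points \<open>x.a_n^j\<close>, \<open>j < l\<close>, are distinct, so each \<open>i\<close> occurs in at most one such pair,
  and \<open>syl(g||_x) = n\<close> forces exactly one \<open>k(i)\<close> for every \<open>i\<close>.  Then the element
  \<open>a_i^-1 a_n^(l - k(i))\<close> of \<open>A\<close> maps \<open>0\<close> to \<open>x\<close>, which yields both the conjugacy statement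
  and the product formula with \<open>j(i) = l - k(i)\<close>.
\<close>

lemma rt_Cons [simp]: "rt f (y # v) = f y # v"
  by (simp add: rt_def)

lemma rt_comp: "rt (f \<circ> g) = rt f \<circ> rt g"
  by (rule ext, simp add: rt_def split: list.split)

lemma rt_id [simp]: "rt id = id"
  by (rule ext, simp add: rt_def split: list.split)

lemma rt_inv_comp:
  assumes "bij f"
  shows "rt f \<circ> rt (inv f) = id" and "rt (inv f) \<circ> rt f = id"
proof -
  have "f \<circ> inv f = id" "inv f \<circ> f = id"
    using assms by (simp_all add: bij_is_inj bij_is_surj flip: surj_iff)
  then show "rt f \<circ> rt (inv f) = id" "rt (inv f) \<circ> rt f = id"
    by (simp_all flip: rt_comp)
qed

lemma inv_rt: "bij f \<Longrightarrow> inv (rt f) = rt (inv f)"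
  by (intro inv_unique_comp rt_inv_comp)

lemma bij_rt: "bij f \<Longrightarrow> bij (rt f)"
  by (rule o_bij[OF rt_inv_comp(2) rt_inv_comp(1)])

lemma tmul_cj_cancel: "bij h \<Longrightarrow> tmul (cj h g) h = tmul h g"
  by (simp add: cj_def tmul_def fun_eq_iff bij_is_surj surj_f_inv_f)

lemma prodL_append: "prodL (xs @ ys) = tmul (prodL xs) (prodL ys)"
  by (induction xs) (auto simp: tmul_def)

lemma prodL_concat: "prodL (concat fss) = prodL (map prodL fss)"
  by (induction fss) (auto simp: prodL_append tmul_def)

lemma length_prodL:
  "(\<And>f v. f \<in> set fs \<Longrightarrow> length (f v) = length v) \<Longrightarrow> length (prodL fs v) = length v"
  by (induction fs arbitrary: v) (auto simp: tmul_def)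

lemma aut_append_sect: "is_aut f \<Longrightarrow> f (u @ v) = f u @ sect f u v"
  unfolding is_aut_def sect_def by (metis append_take_drop_id length_append)

lemma in_St1_Cons: "in_St1 b \<Longrightarrow> b (y # v) = y # sect b [y] v"
  using aut_append_sect[of b "[y]" v] by (simp add: in_St1_def)

lemma length_sect_St1: "in_St1 b \<Longrightarrow> length (sect b [y] v) = length v"
  by (simp add: in_St1_def is_aut_def sect_def)

lemma cj_rt_Cons: "bij a \<Longrightarrow> in_St1 b \<Longrightarrow> cj (rt a) b (y # v) = y # sect b [a y] v"
  by (simp add: cj_def tmul_def inv_rt in_St1_Cons bij_is_inj)

lemma prodL_cj_rt_Cons:
  assumes "\<forall>a \<in> set as. bij a" "\<forall>b \<in> set bs. in_St1 b"
  shows "prodL (map2 (\<lambda>a b. cj (rt a) b) as bs) (y # v) = y # prodL (map2 (\<lambda>a b. sect b [a y]) as bs) v"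
  using assms
proof (induction as arbitrary: bs v)
  case (Cons a as)
  then show ?case by (cases bs) (auto simp: tmul_def cj_rt_Cons)
qed simp

lemma syl_word_Cons:
  assumes "\<forall>a \<in> set as. bij a" "\<forall>b \<in> set bs. in_St1 b"
  shows "syl_word as bs c (y # v) = c y # prodL (map2 (\<lambda>a b. sect b [a y]) as bs) v"
  by (simp add: syl_word_def tmul_def prodL_cj_rt_Cons[OF assms])

lemma syl_word_snoc_rt: "tmul (syl_word as bs c) (rt a) = syl_word as bs (tmul c a)"
  by (simp add: syl_word_def tmul_def rt_comp comp_assoc)

lemma syl_word_snoc:
  assumes "bij c" "length as = length bs"
  shows "tmul (syl_word as bs c) b = syl_word (as @ [c]) (bs @ [b]) c"
proof -
  have "b \<circ> rt c = rt c \<circ> cj (rt c) b"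
    using tmul_cj_cancel[OF bij_rt[OF assms(1)], of b] by (simp add: tmul_def)
  then show ?thesis
    using assms(2) by (simp add: syl_word_def prodL_append tmul_def flip: comp_assoc)
qed

lemma prodL_eq_syl_word:
  assumes A: "is_subgroup A" and fs: "set fs \<subseteq> B \<union> rt ` A"
  shows "\<exists>as bs c. length as = length (filter (\<lambda>f. f \<notin> rt ` A) fs) \<and> length bs = length as \<and>
           set as \<subseteq> A \<and> set bs \<subseteq> B \<and> c \<in> A \<and> prodL fs = syl_word as bs c"
  using fs
proof (induction fs rule: rev_induct)
  case Nil
  have "syl_word [] [] id = id"
    by (simp add: syl_word_def tmul_def)
  moreover have "id \<in> A"
    using A by (simp add: is_subgroup_def)
  ultimately show ?case
    by (metis empty_subsetI filter.simps(1) list.size(3) prodL.simps(1) set_empty2)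
next
  case (snoc f fs)
  then obtain as bs c where IH: "length as = length (filter (\<lambda>f. f \<notin> rt ` A) fs)"
    "length bs = length as" "set as \<subseteq> A" "set bs \<subseteq> B" "c \<in> A" "prodL fs = syl_word as bs c"
    by auto
  have prodL_snoc: "prodL (fs @ [f]) = tmul (syl_word as bs c) f"
    using IH(6) by (simp add: prodL_append tmul_def)
  show ?case
  proof (cases "f \<in> rt ` A")
    case True
    then obtain a where "a \<in> A" "f = rt a"
      by blast
    then have "prodL (fs @ [f]) = syl_word as bs (tmul c a)" "tmul c a \<in> A"
      using prodL_snoc syl_word_snoc_rt IH(5) A by (auto simp: is_subgroup_def)
    moreover have "length as = length (filter (\<lambda>f. f \<notin> rt ` A) (fs @ [f]))"
      using True IH(1) by simp
    ultimately show ?thesis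
      using IH(2-4) by blast
  next
    case False
    then have "f \<in> B" "bij c"
      using snoc.prems IH(5) A by (auto simp: is_subgroup_def)
    then have "prodL (fs @ [f]) = syl_word (as @ [c]) (bs @ [f]) c"
      using prodL_snoc syl_word_snoc IH(2) by metis
    then show ?thesis
      using False IH \<open>f \<in> B\<close> by (intro exI[of _ "as @ [c]"] exI[of _ "bs @ [f]"] exI[of _ c]) auto
  qed
qed

lemma syl_prodL_le:
  assumes "is_subgroup A" "set fs \<subseteq> B \<union> rt ` A"
  shows "syl A B (prodL fs) \<le> length (filter (\<lambda>f. f \<notin> rt ` A) fs)"
  unfolding syl_def by (rule Least_le) (use prodL_eq_syl_word[OF assms] in metis)

lemma funpow_orb_len: "fin_orbit \<sigma> x \<Longrightarrow> (\<sigma> ^^ orb_len \<sigma> x) x = x"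
  using LeastI_ex[of "\<lambda>k. 0 < k \<and> (\<sigma> ^^ k) x = x"] by (simp add: orb_len_def fin_orbit_def)

lemma inj_on_orbit:
  assumes "fin_orbit \<sigma> x"
  shows "inj_on (\<lambda>j. (\<sigma> ^^ j) x) {..<orb_len \<sigma> x}"
proof -
  define l where "l = orb_len \<sigma> x"
  have orbit_distinct: "(\<sigma> ^^ p) x \<noteq> (\<sigma> ^^ q) x" if "p < q" "q < l" for p q
  proof
    assume eq: "(\<sigma> ^^ p) x = (\<sigma> ^^ q) x"
    have "(\<sigma> ^^ (l - q + p)) x = (\<sigma> ^^ (l - q)) ((\<sigma> ^^ q) x)"
      by (simp add: funpow_add eq)
    also have "\<dots> = x"
      using funpow_orb_len[OF assms] \<open>q < l\<close>
      by (simp add: l_def flip: funpow_add comp_apply[of "\<sigma> ^^ _" "\<sigma> ^^ _"])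
    finally have "(\<sigma> ^^ (l - q + p)) x = x" .
    moreover have "0 < l - q + p" "l - q + p < l"
      using that by auto
    ultimately show False
      using not_less_Least[of "l - q + p" "\<lambda>k. 0 < k \<and> (\<sigma> ^^ k) x = x"]
      unfolding l_def orb_len_def by blast
  qed
  show ?thesis
  proof (rule inj_onI)
    fix p q
    assume "p \<in> {..<orb_len \<sigma> x}" "q \<in> {..<orb_len \<sigma> x}" "(\<sigma> ^^ p) x = (\<sigma> ^^ q) x"
    then show "p = q"
      using orbit_distinct[of p q] orbit_distinct[of q p]
      by (cases p q rule: linorder_cases) (auto simp: l_def)
  qed
qed

context
  fixes f :: "'x list \<Rightarrow> 'x list" and \<sigma> :: "'x \<Rightarrow> 'x" and \<tau> :: "'x \<Rightarrow> 'x list \<Rightarrow> 'x list"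
  assumes f_Cons: "\<And>y v. f (y # v) = \<sigma> y # \<tau> y v"
    and length_\<tau>: "\<And>y v. length (\<tau> y v) = length v"
begin

lemma funpow_Cons:
  "(f ^^ k) (y # v) = (\<sigma> ^^ k) y # prodL (map (\<lambda>j. \<tau> ((\<sigma> ^^ j) y)) [0..<k]) v"
  by (induction k) (simp_all add: f_Cons prodL_append tmul_def)

lemma funpow_singleton: "(f ^^ k) [y] = [(\<sigma> ^^ k) y]"
proof -
  have "length (prodL (map (\<lambda>j. \<tau> ((\<sigma> ^^ j) y)) [0..<k]) []) = 0"
    using length_prodL[of "map (\<lambda>j. \<tau> ((\<sigma> ^^ j) y)) [0..<k]" "[]"] length_\<tau> by auto
  then show ?thesis
    by (simp add: funpow_Cons)
qed

lemma fin_orbit_singleton: "fin_orbit f [y] = fin_orbit \<sigma> y"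
  by (simp add: fin_orbit_def funpow_singleton)

lemma orb_len_singleton: "orb_len f [y] = orb_len \<sigma> y"
  by (simp add: orb_len_def funpow_singleton)

lemma sect_pow_eq: "sect_pow f y = prodL (map (\<lambda>j. \<tau> ((\<sigma> ^^ j) y)) [0..<orb_len \<sigma> y])"
  by (simp add: sect_pow_def sect_def funpow_Cons orb_len_singleton)

end

lemma syl_word_upt_Cons:
  assumes "\<forall>i<n. bij (a i) \<and> in_St1 (b i)"
  shows "syl_word (map a [0..<n]) (map b [0..<n]) c (y # v)
           = c y # prodL (map (\<lambda>i. sect (b i) [a i y]) [0..<n]) v"
  using assms by (auto simp: syl_word_Cons map2_map_map)

lemma syl_orbit_sections_le:
  assumes CS: "CS_data z A B" and a_in: "\<forall>i<n. a i \<in> A" and b_in: "\<forall>i<n. b i \<in> B"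
    and fin: "fin_orbit \<sigma> x"
  defines "l \<equiv> orb_len \<sigma> x"
  shows "syl A B (prodL (concat (map (\<lambda>j. map (\<lambda>i. sect (b i) [a i ((\<sigma> ^^ j) x)]) [0..<n]) [0..<l])))
           \<le> card {i. i < n \<and> (\<exists>j<l. a i ((\<sigma> ^^ j) x) = z)}"
proof -
  define F where "F = (\<lambda>(j, i). sect (b i) [a i ((\<sigma> ^^ j) x)])"
  define hit where "hit = (\<lambda>(j, i). a i ((\<sigma> ^^ j) x) = z)"
  define ps where "ps = List.product [0..<l] [0..<n]"
  have A: "is_subgroup A" and sect_z: "\<forall>b\<in>B. sect b [z] = b"
    and sect_rooted: "\<forall>b\<in>B. \<forall>y. y \<noteq> z \<longrightarrow> (\<exists>a\<in>A. sect b [y] = rt a)"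
    using CS unfolding CS_data_def by blast+
  have F_hit: "F p \<in> B" if "p \<in> set ps" "hit p" for p
    using that sect_z b_in unfolding F_def hit_def ps_def by (auto split: prod.splits)
  have F_rooted: "F p \<in> rt ` A" if "p \<in> set ps" "\<not> hit p" for p
    using that sect_rooted b_in unfolding F_def hit_def ps_def by (fastforce split: prod.splits)
  have "syl A B (prodL (map F ps)) \<le> length (filter (\<lambda>f. f \<notin> rt ` A) (map F ps))"
    using F_hit F_rooted by (intro syl_prodL_le[OF A]) auto
  also have "\<dots> = card {p \<in> set ps. F p \<notin> rt ` A}"
    by (simp add: filter_map ps_def distinct_product flip: distinct_card)
  also have "\<dots> \<le> card {p \<in> set ps. hit p}"
    using F_rooted by (intro card_mono) auto
  also have "\<dots> = card (snd ` {p \<in> set ps. hit p})"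
  proof -
    have "j = j'" if "j < l" "j' < l" "i < n" "a i ((\<sigma> ^^ j) x) = z" "a i ((\<sigma> ^^ j') x) = z"
      for j j' i
    proof -
      have "inj (a i)"
        using a_in A \<open>i < n\<close> by (simp add: is_subgroup_def bij_is_inj)
      then have "(\<sigma> ^^ j) x = (\<sigma> ^^ j') x"
        using that by (metis injD)
      then show "j = j'"
        using inj_on_orbit[OF fin] that by (simp add: inj_on_def l_def)
    qed
    then have "inj_on snd {p \<in> set ps. hit p}"
      by (auto simp: inj_on_def ps_def hit_def)
    then show ?thesis
      by (rule card_image[symmetric])
  qed
  also have "snd ` {p \<in> set ps. hit p} = {i. i < n \<and> (\<exists>j<l. a i ((\<sigma> ^^ j) x) = z)}"
    by (force simp: ps_def hit_def)
  finally show ?thesis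
    by (simp add: ps_def product_concat_map map_concat F_def comp_def)
qed

lemma
  fixes c :: "'x \<Rightarrow> 'x"
  assumes "\<forall>i<n. bij (a i) \<and> in_St1 (b i)"
  defines "g \<equiv> syl_word (map a [0..<n]) (map b [0..<n]) c"
  shows orb_len_syl_word: "orb_len g [y] = orb_len c y"
    and fin_orbit_syl_word: "fin_orbit g [y] = fin_orbit c y"
    and sect_pow_syl_word: "sect_pow g y =
      prodL (concat (map (\<lambda>j. map (\<lambda>i. sect (b i) [a i ((c ^^ j) y)]) [0..<n]) [0..<orb_len c y]))"
proof -
  define \<tau> where "\<tau> y = prodL (map (\<lambda>i. sect (b i) [a i y]) [0..<n])" for y
  have g_Cons: "g (y # v) = c y # \<tau> y v" for y v
    using assms(1) by (simp add: g_def \<tau>_def syl_word_upt_Cons)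
  have length_\<tau>: "length (\<tau> y v) = length v" for y v
    using assms(1) unfolding \<tau>_def by (intro length_prodL) (auto simp: length_sect_St1)
  show "orb_len g [y] = orb_len c y" "fin_orbit g [y] = fin_orbit c y"
    by (rule orb_len_singleton[of g c \<tau>, OF g_Cons length_\<tau>],
        rule fin_orbit_singleton[of g c \<tau>, OF g_Cons length_\<tau>])
  show "sect_pow g y =
      prodL (concat (map (\<lambda>j. map (\<lambda>i. sect (b i) [a i ((c ^^ j) y)]) [0..<n]) [0..<orb_len c y]))"
    using sect_pow_eq[of g c \<tau>, OF g_Cons length_\<tau>] by (simp add: \<tau>_def prodL_concat comp_def)
qed

lemma syl_sections_hit_zero:
  assumes CS: "CS_data z A B" and "\<forall>i<n. a i \<in> A" "\<forall>i<n. b i \<in> B" "fin_orbit \<sigma> x"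
    and syl: "n \<le> syl A B (prodL (concat (map (\<lambda>j. map (\<lambda>i. sect (b i) [a i ((\<sigma> ^^ j) x)])
                  [0..<n]) [0..<orb_len \<sigma> x])))"
    and "i < n"
  shows "\<exists>j<orb_len \<sigma> x. a i ((\<sigma> ^^ j) x) = z"
proof -
  let ?H = "{i. i < n \<and> (\<exists>j<orb_len \<sigma> x. a i ((\<sigma> ^^ j) x) = z)}"
  have "n \<le> card ?H"
    using syl syl_orbit_sections_le[OF assms(1-4)] by linarith
  then have "?H = {..<n}"
    by (intro card_seteq) auto
  then show ?thesis
    using \<open>i < n\<close> by blast
qed

lemma funpow_in_subgroup: "is_subgroup A \<Longrightarrow> c \<in> A \<Longrightarrow> c ^^ m \<in> A"
  by (induction m) (auto simp: is_subgroup_def tmul_def)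

lemma funpow_orb_len_diff:
  "fin_orbit \<sigma> x \<Longrightarrow> j \<le> orb_len \<sigma> x \<Longrightarrow> (\<sigma> ^^ (orb_len \<sigma> x - j)) ((\<sigma> ^^ j) x) = x"
  by (metis funpow_orb_len funpow_add comp_apply le_add_diff_inverse2)

lemma funpow_inv_return:
  assumes "fin_orbit \<sigma> x" "j \<le> orb_len \<sigma> x" "inj a" "a ((\<sigma> ^^ j) x) = z"
  shows "(\<sigma> ^^ (orb_len \<sigma> x - j)) (inv a z) = x"
  using funpow_orb_len_diff[OF assms(1,2)] inv_f_eq[OF assms(3,4)] by simp

lemma conj_in_Cfrak:
  assumes A: "is_subgroup A" and "a \<in> A" "c \<in> A" and ret: "(c ^^ m) (inv a z) = x"
  shows "tmul (tmul (inv a) c) a \<in> Cfrak A z c x"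
proof -
  define d where "d = tmul (inv a) (c ^^ m)"
  have "d \<in> A"
    using A funpow_in_subgroup[OF A assms(3)] assms(2) unfolding is_subgroup_def d_def by blast
  then have "inj d"
    using A by (simp add: is_subgroup_def bij_is_inj)
  have "bij a"
    using A assms(2) by (simp add: is_subgroup_def)
  have "inv d (c (d y)) = a (c (inv a y))" for y
  proof -
    have "d (a (c (inv a y))) = c (d y)"
      using \<open>bij a\<close> by (simp add: d_def tmul_def bij_is_inj funpow_swap1)
    then show ?thesis
      using \<open>inj d\<close> by (metis inv_f_eq)
  qed
  then have "tmul (tmul (inv a) c) a = tmul (tmul d c) (inv d)"
    by (simp add: tmul_def fun_eq_iff)
  moreover have "d z = x"
    using ret by (simp add: d_def tmul_def)
  ultimately show ?thesis
    using \<open>d \<in> A\<close> unfolding Cfrak_def mpA_def by blast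
qed

lemma conj_zpow_apply:
  "(c ^^ m) (inv a z) = x \<Longrightarrow> tmul (tmul (inv a) (zpow c (int j + int m))) a z = a ((c ^^ j) x)"
  by (simp add: tmul_def zpow_def nat_add_distrib funpow_add)

theorem mainTheorem7:
  fixes z :: 'x
    and A :: "('x \<Rightarrow> 'x) set"
    and B :: "('x list \<Rightarrow> 'x list) set"
    and a :: "nat \<Rightarrow> ('x \<Rightarrow> 'x)"
    and b :: "nat \<Rightarrow> ('x list \<Rightarrow> 'x list)"
    and n :: nat and x :: 'x
    and g :: "'x list \<Rightarrow> 'x list"
  assumes CS: "CS_data z A B"
    and a_in: "\<forall>i\<le>n. a i \<in> A"
    and b_in: "\<forall>i<n. b i \<in> B"
    and g_def: "g = syl_word (map a [0..<n]) (map b [0..<n]) (a n)"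
    and fin: "fin_orbit g [x]"
    and syl1: "n = syl A B (sect_pow g x)"
    and syl2: "n = syl A B g"
  shows "(\<forall>i<n. tmul (tmul (inv (a i)) (a n)) (a i) \<in> Cfrak A z (a n) x) \<and>
         (\<exists>jf :: nat \<Rightarrow> int.
            sect_pow g x =
              prodL (concat (map (\<lambda>j. map (\<lambda>i.
                  sect (b i) [(tmul (tmul (inv (a i)) (zpow (a n) (int j + jf i))) (a i)) z])
                [0..<n]) [0..<orb_len g [x]])))"
proof -
  have A: "is_subgroup A" and "\<forall>b\<in>B. in_St1 b"
    using CS unfolding CS_data_def by blast+
  then have ab: "\<forall>i<n. bij (a i) \<and> in_St1 (b i)"
    using a_in b_in by (simp add: is_subgroup_def)
  define l where "l = orb_len (a n) x"
  have fin_an: "fin_orbit (a n) x" and l_eq: "orb_len g [x] = l"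
    using fin fin_orbit_syl_word[OF ab] orb_len_syl_word[OF ab] by (simp_all add: g_def l_def)
  have sect_pow: "sect_pow g x =
      prodL (concat (map (\<lambda>j. map (\<lambda>i. sect (b i) [a i ((a n ^^ j) x)]) [0..<n]) [0..<l]))"
    using sect_pow_syl_word[OF ab] by (simp add: g_def l_def)
  have "n \<le> syl A B (prodL (concat (map (\<lambda>j. map (\<lambda>i. sect (b i) [a i ((a n ^^ j) x)])
                  [0..<n]) [0..<orb_len (a n) x])))"
    by (unfold l_def[symmetric] sect_pow[symmetric] syl1[symmetric]) simp
  then have "\<forall>i<n. \<exists>j<l. a i ((a n ^^ j) x) = z"
    using syl_sections_hit_zero[OF CS _ b_in fin_an] a_in by (simp add: l_def)
  then obtain k where k: "\<And>i. i < n \<Longrightarrow> k i < l \<and> a i ((a n ^^ k i) x) = z"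
    by metis
  have ret: "(a n ^^ (l - k i)) (inv (a i) z) = x" if "i < n" for i
    using funpow_inv_return[OF fin_an, of "k i" "a i"] k[OF that] ab that by (simp add: l_def bij_is_inj)
  show ?thesis
  proof (intro conjI allI impI exI)
    show "tmul (tmul (inv (a i)) (a n)) (a i) \<in> Cfrak A z (a n) x" if "i < n" for i
      using conj_in_Cfrak[OF A _ _ ret] a_in that by simp
    show "sect_pow g x = prodL (concat (map (\<lambda>j. map (\<lambda>i.
        sect (b i) [(tmul (tmul (inv (a i)) (zpow (a n) (int j + int (l - k i)))) (a i)) z])
      [0..<n]) [0..<orb_len g [x]]))"
      unfolding sect_pow l_eq
      by (intro arg_cong[where f = prodL] arg_cong[where f = concat] map_cong refl)
        (simp add: conj_zpow_apply[OF ret])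
  qed
qed

end
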